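(* Let $n\ge 1$ be an integer and let $x,\tilde x\in\{0,1\}^n$ with $|x|_1\le|\tilde x|_1$. Let $y$ and $\tilde y$ be random points of $\{0,1\}^n$ obtained from $x$ and $\tilde x$, respectively, by flipping each bit independently with probability $1/n$. Then for every $j\in\{0,\dots,|x|_1-1\}$, $$\Pr\big[|y|_1=j\big]\ge\Pr\big[|\tilde y|_1=j\big].$$
   Context: $|x|_1=\sum_{i=1}^n x_i$ denotes the number of one-bits of $x\in\{0,1\}^n$. *)

theory Defs
  imports "HOL-Probability.Probability"
begin

text \<open>Bit strings in {0,1}^n are modelled as bool lists of length n (True = one-bit).\<close>

definition ones :: "bool list \<Rightarrow> nat" where
  "ones xs = length (filter id xs)"

fun mutate :: "real \<Rightarrow> bool list \<Rightarrow> bool list pmf" where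
  "mutate p [] = return_pmf []"
| "mutate p (b # bs) =
     bind_pmf (bernoulli_pmf p) (\<lambda>f.
     bind_pmf (mutate p bs) (\<lambda>ys. return_pmf ((if f then \<not> b else b) # ys)))"

end

theory Submission
  imports Defs
begin

(* Write p = 1/n.  The number of one-bits of the mutant of x is the sum of
   independent Bernoulli bits: each one-bit of x survives with probability 1 - p and each
   zero-bit is turned on with probability p.  Adding an independent Bernoulli(r) bit to a
   count with distribution f is the linear operator  add_bit r f j = (1-r) f j + r f (j-1);
   these operators commute, so the law of |y|_1 only depends on a = |x|_1 and c = n - a:
     ones_law p a c = add_bit (1-p)^a (add_bit p^c (point mass at 0)).
   Turning one zero-bit of x into a one-bit replaces add_bit p Z by add_bit (1-p) Z, where
   Z = add_bit p^(c-1) Bin(a, 1-p).  The difference at j is (1 - 2p)(Z j - Z (j-1)), which is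
   nonnegative for j <= a because Bin(a, 1-1/n) is nondecreasing on {0..a} when a < n and
   add_bit preserves this monotonicity.  Iterating from |x|_1 up to |x'|_1 gives lemma9. *)

definition add_bit :: "real \<Rightarrow> (nat \<Rightarrow> real) \<Rightarrow> nat \<Rightarrow> real" where
  "add_bit r f j = (1 - r) * f j + r * (if j = 0 then 0 else f (j - 1))"

lemma add_bit_commute: "add_bit r (add_bit s f) = add_bit s (add_bit r f)"
proof
  fix j show "add_bit r (add_bit s f) j = add_bit s (add_bit r f) j"
    by (cases "j = 0"; cases "j = 1") (auto simp: add_bit_def algebra_simps)
qed

lemma add_bit_funpow_commute1: "(add_bit s ^^ a) (add_bit r f) = add_bit r ((add_bit s ^^ a) f)"
  by (induction a) (simp_all add: add_bit_commute)

lemma add_bit_funpow_commute: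
  "(add_bit s ^^ a) ((add_bit r ^^ c) f) = (add_bit r ^^ c) ((add_bit s ^^ a) f)"
  by (induction c) (simp_all add: add_bit_funpow_commute1)

definition ones_law :: "real \<Rightarrow> nat \<Rightarrow> nat \<Rightarrow> nat \<Rightarrow> real" where
  "ones_law p a c = (add_bit (1 - p) ^^ a) ((add_bit p ^^ c) (pmf (return_pmf 0)))"

lemma ones_Cons: "ones (b # bs) = (if b then Suc (ones bs) else ones bs)"
  by (simp add: ones_def)

lemma ones_le_length: "ones xs \<le> length xs"
  by (simp add: ones_def)

lemma pmf_map_Suc: "pmf (map_pmf Suc M) j = (if j = 0 then 0 else pmf M (j - 1))"
proof (cases j)
  case 0 then show ?thesis by (auto intro!: pmf_map_outside)
next
  case (Suc i) then show ?thesis using pmf_map_inj'[of Suc M i] by simp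
qed

lemma pmf_ones_mutate_Cons:
  assumes "0 \<le> p" "p \<le> 1"
  shows "pmf (map_pmf ones (mutate p (b # bs))) =
         add_bit (if b then 1 - p else p) (pmf (map_pmf ones (mutate p bs)))"
proof
  fix j
  let ?M = "map_pmf ones (mutate p bs)"
  have "map_pmf ones (mutate p (b # bs)) =
        bernoulli_pmf p \<bind> (\<lambda>f. map_pmf (\<lambda>c. if (if f then \<not> b else b) then Suc c else c) ?M)"
    by (simp add: map_bind_pmf map_return_pmf pmf.map_comp o_def ones_Cons
          map_pmf_def[symmetric] cong: if_cong)
  then have "pmf (map_pmf ones (mutate p (b # bs))) j =
      p * pmf (map_pmf (\<lambda>c. if \<not> b then Suc c else c) ?M) j
      + (1 - p) * pmf (map_pmf (\<lambda>c. if b then Suc c else c) ?M) j"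
    using assms by (simp add: pmf_bind algebra_simps)
  then show "pmf (map_pmf ones (mutate p (b # bs))) j = add_bit (if b then 1 - p else p) (pmf ?M) j"
    by (cases b) (simp_all add: add_bit_def pmf_map_Suc algebra_simps)
qed

lemma pmf_ones_mutate:
  assumes "0 \<le> p" "p \<le> 1"
  shows "pmf (map_pmf ones (mutate p x)) = ones_law p (ones x) (length x - ones x)"
proof (induction x)
  case Nil then show ?case by (simp add: ones_law_def ones_def)
next
  case (Cons b bs)
  show ?case
  proof (cases b)
    case True
    then show ?thesis
      by (simp only: pmf_ones_mutate_Cons[OF assms] Cons.IH) (simp add: ones_Cons ones_law_def)
  next
    case False
    then have "length (b # bs) - ones (b # bs) = Suc (length bs - ones bs)"
      using ones_le_length[of bs] by (simp add: ones_Cons)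
    then show ?thesis using False
      by (simp only: pmf_ones_mutate_Cons[OF assms] Cons.IH)
        (simp add: ones_Cons ones_law_def add_bit_funpow_commute1)
  qed
qed

lemma prob_ones_mutate:
  assumes "0 \<le> p" "p \<le> 1"
  shows "measure_pmf.prob (mutate p x) {y. ones y = j} = ones_law p (ones x) (length x - ones x) j"
proof -
  have "measure_pmf.prob (mutate p x) {y. ones y = j} = pmf (map_pmf ones (mutate p x)) j"
    by (simp add: pmf_map vimage_def)
  then show ?thesis using pmf_ones_mutate[OF assms] by simp
qed

lemma add_bit_funpow_binomial:
  assumes "0 \<le> q" "q \<le> 1"
  shows "(add_bit q ^^ k) (pmf (return_pmf 0)) = pmf (binomial_pmf k q)"
proof (induction k)
  case 0 then show ?case using assms by (simp add: binomial_pmf_0)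
next
  case (Suc k)
  have q01: "q \<in> {0..1}" using assms by simp
  have "binomial_pmf (Suc k) q =
        bernoulli_pmf q \<bind> (\<lambda>b. if b then map_pmf Suc (binomial_pmf k q) else binomial_pmf k q)"
    unfolding binomial_pmf_Suc[OF q01] by (intro bind_pmf_cong) (auto simp: map_pmf_def bind_return_pmf')
  then have "pmf (binomial_pmf (Suc k) q) j =
      q * pmf (map_pmf Suc (binomial_pmf k q)) j + (1 - q) * pmf (binomial_pmf k q) j" for j
    using assms by (simp add: pmf_bind del: pmf_binomial)
  then show ?case
    by (simp only: funpow.simps o_apply Suc.IH)
      (simp add: fun_eq_iff add_bit_def pmf_map_Suc algebra_simps del: pmf_binomial)
qed

definition mono_upto :: "(nat \<Rightarrow> real) \<Rightarrow> nat \<Rightarrow> bool" where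
  "mono_upto f J \<longleftrightarrow> (\<forall>i<J. f i \<le> f (Suc i))"

lemma add_bit_funpow_nonneg:
  assumes "0 \<le> r" "r \<le> 1" "\<And>i. 0 \<le> f i"
  shows "0 \<le> (add_bit r ^^ m) f j"
  using assms by (induction m arbitrary: j) (auto simp: add_bit_def)

lemma add_bit_mono_upto:
  assumes "0 \<le> r" "r \<le> 1" "\<And>i. 0 \<le> f i" "mono_upto f J"
  shows "mono_upto (add_bit r f) J"
  unfolding mono_upto_def
proof (intro allI impI)
  fix i assume "i < J"
  then have step: "f i \<le> f (Suc i)" and prev: "(if i = 0 then 0 else f (i - 1)) \<le> f i"
    using assms(3,4) by (cases i; auto simp: mono_upto_def)+
  have "(1 - r) * f i \<le> (1 - r) * f (Suc i)" using step assms(2) by (simp add: mult_left_mono)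
  moreover have "r * (if i = 0 then 0 else f (i - 1)) \<le> r * f i"
    using prev assms(1) by (rule mult_left_mono)
  ultimately show "add_bit r f i \<le> add_bit r f (Suc i)"
    by (simp add: add_bit_def)
qed

lemma add_bit_funpow_mono_upto:
  assumes "0 \<le> r" "r \<le> 1" "\<And>i. 0 \<le> f i" "mono_upto f J"
  shows "mono_upto ((add_bit r ^^ m) f) J"
  by (induction m) (use assms in \<open>auto intro!: add_bit_mono_upto add_bit_funpow_nonneg\<close>)

text \<open>Bin(k, q) is nondecreasing on {0..k} as soon as its mode is k, i.e. k (1 - q) \<le> q.\<close>

lemma binomial_pmf_mono_upto:
  assumes q: "0 \<le> q" "q \<le> 1" and mode: "real k * (1 - q) \<le> q"
  shows "mono_upto (pmf (binomial_pmf k q)) k"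
  unfolding mono_upto_def
proof (intro allI impI)
  fix i assume "i < k"
  have ratio: "real (Suc i) * real (k choose Suc i) = real (k - i) * real (k choose i)"
    using binomial_absorption[of i k] binomial_absorb_comp[of k i] by (metis of_nat_mult)
  have "real (Suc i) * (1 - q) \<le> real k * (1 - q)"
    using \<open>i < k\<close> q by (intro mult_right_mono) auto
  also have "\<dots> \<le> q" by (rule mode)
  also have "\<dots> \<le> real (k - i) * q"
    using \<open>i < k\<close> q mult_right_mono[of 1 "real (k - i)" q] by simp
  finally have bound: "real (Suc i) * (1 - q) \<le> real (k - i) * q" .
  have "real (Suc i) * ((k choose i) * (1 - q)) = (k choose i) * (real (Suc i) * (1 - q))"
    by simp
  also have "\<dots> \<le> (k choose i) * (real (k - i) * q)"
    using bound by (rule mult_left_mono) simp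
  also have "\<dots> = real (Suc i) * ((k choose Suc i) * q)"
    using ratio by (simp add: algebra_simps)
  finally have "real (Suc i) * ((k choose i) * (1 - q)) \<le> real (Suc i) * ((k choose Suc i) * q)" .
  then have coeff: "(k choose i) * (1 - q) \<le> (k choose Suc i) * q"
    by (simp add: mult_le_cancel_left_pos)
  have split: "k - i = Suc (k - Suc i)" using \<open>i < k\<close> by simp
  have "(k choose i) * q ^ i * (1 - q) ^ (k - i)
        = ((k choose i) * (1 - q)) * (q ^ i * (1 - q) ^ (k - Suc i))"
    by (simp add: split algebra_simps)
  also have "\<dots> \<le> ((k choose Suc i) * q) * (q ^ i * (1 - q) ^ (k - Suc i))"
    using coeff q by (intro mult_right_mono) auto
  also have "\<dots> = (k choose Suc i) * q ^ Suc i * (1 - q) ^ (k - Suc i)"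
    by (simp add: algebra_simps)
  finally show "pmf (binomial_pmf k q) i \<le> pmf (binomial_pmf k q) (Suc i)"
    using q by simp
qed

lemma ones_law_step:
  assumes p: "0 \<le> p" "p \<le> 1 / 2" and mode: "real k * p \<le> 1 - p"
    and "k < m" and "j \<le> k"
  shows "ones_law p (Suc k) (m - Suc k) j \<le> ones_law p k (m - k) j"
proof -
  define Z where "Z = (add_bit p ^^ (m - Suc k)) (pmf (binomial_pmf k (1 - p)))"
  have bin: "(add_bit (1 - p) ^^ k) (pmf (return_pmf 0)) = pmf (binomial_pmf k (1 - p))"
    using p by (intro add_bit_funpow_binomial) auto
  have "m - k = Suc (m - Suc k)" using \<open>k < m\<close> by simp
  then have law_k: "ones_law p k (m - k) = add_bit p Z"
    unfolding ones_law_def Z_def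
    by (simp add: add_bit_funpow_commute1 add_bit_funpow_commute[where s = "1 - p" and a = k] bin)
  have law_Suc_k: "ones_law p (Suc k) (m - Suc k) = add_bit (1 - p) Z"
    unfolding ones_law_def Z_def by (simp add: add_bit_funpow_commute[where s = "1 - p" and a = k] bin)
  have Z_mono: "mono_upto Z k"
    unfolding Z_def using p mode
    by (intro add_bit_funpow_mono_upto binomial_pmf_mono_upto) auto
  have Z_nonneg: "0 \<le> Z i" for i
    unfolding Z_def using p by (intro add_bit_funpow_nonneg) auto
  have "(if j = 0 then 0 else Z (j - 1)) \<le> Z j"
    using Z_mono Z_nonneg \<open>j \<le> k\<close> by (cases j) (auto simp: mono_upto_def)
  then have "0 \<le> (1 - 2 * p) * (Z j - (if j = 0 then 0 else Z (j - 1)))"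
    using p by (intro mult_nonneg_nonneg) auto
  also have "\<dots> = add_bit p Z j - add_bit (1 - p) Z j"
    by (simp add: add_bit_def algebra_simps)
  finally show ?thesis using law_k law_Suc_k by simp
qed

lemma ones_law_antimono:
  assumes p: "0 \<le> p" "p \<le> 1 / 2" and mode: "real (b - 1) * p \<le> 1 - p"
    and "a \<le> b" "b \<le> m" "j \<le> a"
  shows "ones_law p b (m - b) j \<le> ones_law p a (m - a) j"
  using \<open>a \<le> b\<close>
proof (induction b rule: dec_induct)
  case base then show ?case by simp
next
  case (step k)
  have "real k * p \<le> real (b - 1) * p"
    using step.hyps p by (intro mult_right_mono) auto
  then have "ones_law p (Suc k) (m - Suc k) j \<le> ones_law p k (m - k) j"
    using step.hyps assms by (intro ones_law_step) auto
  then show ?case using step.IH by linarith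
qed

theorem lemma9:
  fixes n :: nat and x x' :: "bool list" and j :: nat
  assumes "n \<ge> 1"
    and "length x = n" and "length x' = n"
    and "ones x \<le> ones x'"
    and "j < ones x"
  shows "measure_pmf.prob (mutate (1 / real n) x) {y. ones y = j}
         \<ge> measure_pmf.prob (mutate (1 / real n) x') {y. ones y = j}"
proof (cases "ones x = ones x'")
  case True
  have "0 \<le> 1 / real n" "1 / real n \<le> 1" using assms(1) by auto
  then show ?thesis using True assms(2,3) prob_ones_mutate[of "1 / real n"] by simp
next
  case False
  have "ones x' \<le> n" using ones_le_length[of x'] assms(3) by simp
  then have "n \<ge> 2" using False assms(4,5) by linarith
  then have p: "0 \<le> 1 / real n" "1 / real n \<le> 1 / 2" by (auto simp: field_simps)
  have "real (ones x' - 1) \<le> real (n - 1)" using \<open>ones x' \<le> n\<close> by simp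
  then have "real (ones x' - 1) \<le> real n - 1" using \<open>n \<ge> 2\<close> by (simp add: of_nat_diff)
  then have mode: "real (ones x' - 1) * (1 / real n) \<le> 1 - 1 / real n"
    using \<open>n \<ge> 2\<close> by (simp add: field_simps)
  have "ones_law (1 / real n) (ones x') (n - ones x') j \<le> ones_law (1 / real n) (ones x) (n - ones x) j"
    using ones_law_antimono[OF p mode] assms \<open>ones x' \<le> n\<close> by simp
  then show ?thesis using prob_ones_mutate[of "1 / real n"] p assms(2,3) by simp
qed

end
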